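(* Let $D$ be a metric on $\mathbb R^a$, let $\epsilon>0$, and let $f,g:\{1,\dots,2n\}\to\{1,\dots,s\}$ be labellings, where for a pair of lists $X=(X_1,\dots,X_n)$, $X'=(X'_1,\dots,X'_n)$ we write $f(X_i)$ for $f(i)$ and $f(X'_i)$ for $f(n+i)$ (and likewise for $g$). Let $S\subseteq(\mathbb R^a)^n\times(\mathbb R^a)^n$ be the set of pairs $(X,X')$ satisfying: (1) for all $\alpha,\beta\in\{1,\dots,n\}$, $f(X_\alpha)=f(X_\beta)$ if and only if $X_\alpha$ and $X_\beta$ are connected by an $\epsilon$-path consisting of points from $(X_1,\dots,X_n)$; (2) for all $\alpha,\beta$, $g(X'_\alpha)=g(X'_\beta)$ if and only if $X'_\alpha$ and $X'_\beta$ are connected by an $\epsilon$-path consisting of points from $(X'_1,\dots,X'_n)$; (3) for every $i=1,\dots,n$, if $j$ is the smallest index such that $X_j$ minimises $D(X'_i,X_k)$ over $k=1,\dots,n$, then $f(X'_i)=f(X_j)$; (4) for every $i=1,\dots,n$, if $j$ is the smallest index such that $X'_j$ minimises $D(X_i,X'_k)$ over $k=1,\dots,n$, then $g(X_i)=g(X'_j)$. Then $S$ is a measurable subset of $(\mathbb R^a)^n\times(\mathbb R^a)^n$.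
   Context: An $\epsilon$-path is a sequence of points $(Y_1,\dots,Y_k)$ with $D(Y_l,Y_{l+1})\le\epsilon$ for $l=1,\dots,k-1$. These conditions describe the preimage of $(f,g)$ under the map sending a pair of $n$-point samples to their Voronoi-extended $\epsilon$-neighbourhood (single-linkage) clusterings restricted to the $2n$ points. Measurability is with respect to the Borel $\sigma$-algebra.
   Formalization: The metric D is also assumed Borel measurable as a function of pairs of points, that is, on $\mathbb R^a\times\mathbb R^a$. The statement above fails without it. *)

theory Defs
  imports "HOL-Analysis.Analysis"
begin

definition is_metric :: "('a \<Rightarrow> 'a \<Rightarrow> real) \<Rightarrow> bool" where
  "is_metric D \<longleftrightarrow>
     (\<forall>x y. D x y = 0 \<longleftrightarrow> x = y) \<and>
     (\<forall>x y. D x y = D y x) \<and>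
     (\<forall>x y z. D x z \<le> D x y + D y z)"

definition eps_path :: "('a \<Rightarrow> 'a \<Rightarrow> real) \<Rightarrow> real \<Rightarrow> 'a set \<Rightarrow> 'a list \<Rightarrow> bool" where
  "eps_path D eps P ys \<longleftrightarrow>
     ys \<noteq> [] \<and> set ys \<subseteq> P \<and>
     (\<forall>l. Suc l < length ys \<longrightarrow> D (ys ! l) (ys ! Suc l) \<le> eps)"

definition eps_connected :: "('a \<Rightarrow> 'a \<Rightarrow> real) \<Rightarrow> real \<Rightarrow> 'a set \<Rightarrow> 'a \<Rightarrow> 'a \<Rightarrow> bool" where
  "eps_connected D eps P x y \<longleftrightarrow>
     (\<exists>ys. eps_path D eps P ys \<and> hd ys = x \<and> last ys = y)"

definition first_argmin :: "('a \<Rightarrow> 'a \<Rightarrow> real) \<Rightarrow> nat \<Rightarrow> (nat \<Rightarrow> 'a) \<Rightarrow> 'a \<Rightarrow> nat" where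
  "first_argmin D n Z x = (LEAST j. j < n \<and> (\<forall>k<n. D x (Z j) \<le> D x (Z k)))"

text \<open>The set S. Indices are 0-based: X i (i<n) carries label f i, X' i carries label f (n+i).\<close>
definition clustering_set ::
  "('a \<Rightarrow> 'a \<Rightarrow> real) \<Rightarrow> real \<Rightarrow> nat \<Rightarrow> (nat \<Rightarrow> nat) \<Rightarrow> (nat \<Rightarrow> nat)
    \<Rightarrow> ((nat \<Rightarrow> 'a) \<times> (nat \<Rightarrow> 'a)) set" where
  "clustering_set D eps n f g =
    {(X, X'). X \<in> ({..<n} \<rightarrow>\<^sub>E UNIV) \<and> X' \<in> ({..<n} \<rightarrow>\<^sub>E UNIV) \<and>
      (\<forall>\<alpha><n. \<forall>\<beta><n. f \<alpha> = f \<beta> \<longleftrightarrow> eps_connected D eps (X ` {..<n}) (X \<alpha>) (X \<beta>)) \<and>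
      (\<forall>\<alpha><n. \<forall>\<beta><n. g (n + \<alpha>) = g (n + \<beta>) \<longleftrightarrow>
                        eps_connected D eps (X' ` {..<n}) (X' \<alpha>) (X' \<beta>)) \<and>
      (\<forall>i<n. f (n + i) = f (first_argmin D n X (X' i))) \<and>
      (\<forall>i<n. g i = g (n + first_argmin D n X' (X i)))}"

end

theory Submission
  imports Defs
begin

text \<open>Every condition defining the set is a countable Boolean combination of events of the form
  \<open>D (Z i) (Z j) \<le> \<epsilon>\<close> or \<open>D (Z i) (Z j) \<le> D (Z i) (Z k)\<close> about the \<open>2n\<close> sample points, each Borel
  because \<open>D\<close> is. The only obstacle is that an \<open>\<epsilon>\<close>-path through the point set \<open>X ` {..<n}\<close> is
  quantified over points; it is replaced by a chain of indices, of which there are countably many.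
  Likewise the first minimiser is a \<open>LEAST\<close> over indices, hence measurable into \<open>\<nat>\<close>.\<close>

definition eps_index_connected ::
    "('a \<Rightarrow> 'a \<Rightarrow> real) \<Rightarrow> real \<Rightarrow> nat \<Rightarrow> (nat \<Rightarrow> 'a) \<Rightarrow> nat \<Rightarrow> nat \<Rightarrow> bool" where
  "eps_index_connected D eps n X a b \<longleftrightarrow>
     (\<exists>js. js \<noteq> [] \<and> set js \<subseteq> {..<n} \<and>
        successively (\<lambda>i j. D (X i) (X j) \<le> eps) js \<and> hd js = a \<and> last js = b)"

text \<open>The index chain may have to start at \<open>a\<close> rather than at another index carrying the same
  point; prepending \<open>a\<close> costs a step of length \<open>D x x\<close>.\<close>
lemma eps_connected_image_iff_index:
  assumes "a < n" "b < n" and D_refl: "\<And>x. D x x \<le> eps"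
  shows "eps_connected D eps (X ` {..<n}) (X a) (X b) \<longleftrightarrow> eps_index_connected D eps n X a b"
proof
  assume "eps_connected D eps (X ` {..<n}) (X a) (X b)"
  then obtain ys where ys: "eps_path D eps (X ` {..<n}) ys" "hd ys = X a" "last ys = X b"
    unfolding eps_connected_def by blast
  then have "ys \<in> lists (X ` {..<n})"
    unfolding eps_path_def by auto
  then obtain js where js: "js \<in> lists {..<n}" "ys = map X js"
    by (auto simp: lists_image)
  have ne: "js \<noteq> []"
    using ys(1) js(2) unfolding eps_path_def by auto
  have "successively (\<lambda>i j. D (X i) (X j) \<le> eps) js"
    using ys(1) js(2) unfolding eps_path_def by (simp add: successively_conv_nth flip: successively_map)
  then have "successively (\<lambda>i j. D (X i) (X j) \<le> eps) (a # js @ [b])"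
    using ne ys(2,3) js(2) D_refl by (simp add: successively_Cons successively_append_iff hd_map last_map)
  then show "eps_index_connected D eps n X a b"
    using js(1) assms(1,2) unfolding eps_index_connected_def
    by (intro exI[of _ "a # js @ [b]"]) auto
next
  assume "eps_index_connected D eps n X a b"
  then obtain js where "js \<noteq> []" "set js \<subseteq> {..<n}" "hd js = a" "last js = b"
      "successively (\<lambda>i j. D (X i) (X j) \<le> eps) js"
    unfolding eps_index_connected_def by blast
  then show "eps_connected D eps (X ` {..<n}) (X a) (X b)"
    unfolding eps_connected_def eps_path_def
    by (intro exI[of _ "map X js"]) (auto simp: hd_map last_map successively_conv_nth)
qed

lemma borel_measurable_PiM_component:
  "(\<lambda>x. x k) \<in> borel_measurable (PiM I (\<lambda>_. borel :: 'a::topological_space measure))"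
proof (cases "k \<in> I")
  case True
  then show ?thesis by (rule measurable_component_singleton)
next
  case False
  then have "\<forall>x\<in>space (PiM I (\<lambda>_. borel :: 'a measure)). x k = undefined"
    by (auto simp: space_PiM)
  then show ?thesis
    by (subst measurable_cong[where g = "\<lambda>_. undefined"]) auto
qed

lemma borel_measurable_case_prod_apply:
  fixes D :: "'a::second_countable_topology \<Rightarrow> 'b::second_countable_topology \<Rightarrow> 'c::topological_space"
  assumes "case_prod D \<in> borel_measurable borel"
    and "u \<in> borel_measurable M" and "v \<in> borel_measurable M"
  shows "(\<lambda>x. D (u x) (v x)) \<in> borel_measurable M"
proof -
  have "(\<lambda>x. (u x, v x)) \<in> borel_measurable M"
    using measurable_Pair[OF assms(2,3)] by (simp add: borel_prod)
  from measurable_compose[OF this assms(1)] show ?thesis by simp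
qed

context
  fixes D :: "'a::second_countable_topology \<Rightarrow> 'a \<Rightarrow> real"
    and M :: "'b measure" and Z :: "'b \<Rightarrow> nat \<Rightarrow> 'a"
  assumes D_measurable: "case_prod D \<in> borel_measurable borel"
    and Z_measurable [measurable]: "\<And>i. (\<lambda>\<omega>. Z \<omega> i) \<in> borel_measurable M"
begin

lemmas [measurable] = borel_measurable_case_prod_apply[OF D_measurable]

lemma pred_eps_index_connected:
  "Measurable.pred M (\<lambda>\<omega>. eps_index_connected D eps n (Z \<omega>) a b)"
  unfolding eps_index_connected_def successively_conv_nth by measurable

lemma measurable_first_argmin:
  assumes "u \<in> borel_measurable M"
  shows "(\<lambda>\<omega>. first_argmin D n (Z \<omega>) (u \<omega>)) \<in> M \<rightarrow>\<^sub>M count_space UNIV"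
  unfolding first_argmin_def by (rule measurable_Least) (use assms in measurable)

end

theorem lemma11p2:
  fixes D :: "'a::euclidean_space \<Rightarrow> 'a \<Rightarrow> real"
    and eps :: real and n s :: nat and f g :: "nat \<Rightarrow> nat"
  assumes "is_metric D"
    and "case_prod D \<in> borel_measurable borel"
    and "eps > 0"
    and "f ` {..<2*n} \<subseteq> {1..s}"
    and "g ` {..<2*n} \<subseteq> {1..s}"
  shows "clustering_set D eps n f g \<in>
           sets (PiM {..<n} (\<lambda>_. borel) \<Otimes>\<^sub>M PiM {..<n} (\<lambda>_. borel))"
proof -
  let ?M = "PiM {..<n} (\<lambda>_. borel :: 'a measure) \<Otimes>\<^sub>M PiM {..<n} (\<lambda>_. borel)"
  have D_refl: "D x x \<le> eps" for x
    using assms(1,3) unfolding is_metric_def by (metis less_eq_real_def)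
  have fst_measurable: "(\<lambda>p. fst p i) \<in> borel_measurable ?M"
    and snd_measurable: "(\<lambda>p. snd p i) \<in> borel_measurable ?M" for i
    by (rule measurable_compose[OF measurable_fst borel_measurable_PiM_component]
        measurable_compose[OF measurable_snd borel_measurable_PiM_component])+
  have clusters_index:
    "(\<forall>\<alpha><n. \<forall>\<beta><n. P \<alpha> \<beta> \<longleftrightarrow> eps_connected D eps (X ` {..<n}) (X \<alpha>) (X \<beta>)) \<longleftrightarrow>
     (\<forall>\<alpha><n. \<forall>\<beta><n. P \<alpha> \<beta> \<longleftrightarrow> eps_index_connected D eps n X \<alpha> \<beta>)" for P X
    by (simp add: eps_connected_image_iff_index[OF _ _ D_refl, where X = X])
  note [measurable] = fst_measurable snd_measurable
    pred_eps_index_connected[OF assms(2) fst_measurable]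
    pred_eps_index_connected[OF assms(2) snd_measurable]
    measurable_first_argmin[OF assms(2) fst_measurable]
    measurable_first_argmin[OF assms(2) snd_measurable]
  have "clustering_set D eps n f g = {p \<in> space ?M.
      (\<forall>\<alpha><n. \<forall>\<beta><n. f \<alpha> = f \<beta> \<longleftrightarrow> eps_index_connected D eps n (fst p) \<alpha> \<beta>) \<and>
      (\<forall>\<alpha><n. \<forall>\<beta><n. g (n + \<alpha>) = g (n + \<beta>) \<longleftrightarrow> eps_index_connected D eps n (snd p) \<alpha> \<beta>) \<and>
      (\<forall>i<n. f (n + i) = f (first_argmin D n (fst p) (snd p i))) \<and>
      (\<forall>i<n. g i = g (n + first_argmin D n (snd p) (fst p i)))}"
    unfolding clustering_set_def by (auto simp: space_pair_measure space_PiM clusters_index)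
  also have "\<dots> \<in> sets ?M"
    by measurable
  finally show ?thesis .
qed

end
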